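(* Let $\mathcal T$ be a theory of $\mathsf{LGI}$, let $\alpha,\beta$ be basic expressions and $c,d\in[0,1]$, and assume every element of $\tau(\alpha,c)$ and of $\tau(\beta,d)$ is provable from $\mathcal T$ in $\mathsf{LGI}$. Then for $r\in[0,1]$: if $r<1-c+d$ then $\mathcal T\vdash_{\mathsf{LGI}}\alpha\Rightarrow_r\beta$, and if $r>1-c+d$ then $\mathcal T\vdash_{\mathsf{LGI}}\lnot(\alpha\Rightarrow_r\beta)$.
   Context: Fix a continuous t-norm $\odot$ on $[0,1]$ and let $c\oplus d = 1-((1-c)\odot(1-d))$. Write $c\odot_{\L} d=\max(c+d-1,0)$, $c\oplus_{\L} d=\min(c+d,1)$. Syntax of $\mathsf{LGI}$: countably many variables $\phi_0,\phi_1,\dots$ and constants $\bot,\top$. Basic expressions are built from variables and constants by binary $\land,\lor,\odot$ and unary $\sim$. A graded implication is written $\alpha\Rightarrow_c\beta$ with $\alpha,\beta$ basic expressions, $c\in[0,1]$. Formulas are built from graded implications by classical $\land,\lor,\lnot$; $\Phi\to\Psi$ abbreviates $\lnot\Phi\lor\Psi$. A theory is a set of formulas. For a basic expression $\alpha$ and $c\in[0,1]$, $\tau(\alpha,c)=\{\top\Rightarrow_t\alpha : t\in[0,1],\ t<c\}\cup\{\alpha\Rightarrow_{1-t}\bot : t\in[0,1],\ t>c\}$. Calculus $\mathsf{LGI}$: axioms are (i) all substitution instances (by graded implications) of classical propositional tautologies; (ii) for all basic expressions $\alpha,\beta,\gamma$ and $c,d\in[0,1]$: ($\land_1$) $(\alpha\Rightarrow_d\beta)\land(\alpha\Rightarrow_d\gamma)\to(\alpha\Rightarrow_d\beta\land\gamma)$;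 ($\land_2$) $\alpha\land\beta\Rightarrow_1\alpha$; ($\land_3$) $\alpha\land\beta\Rightarrow_1\beta$; ($\lor_1$) $(\alpha\Rightarrow_d\gamma)\land(\beta\Rightarrow_d\gamma)\to(\alpha\lor\beta\Rightarrow_d\gamma)$; ($\lor_2$) $\alpha\Rightarrow_1\alpha\lor\beta$; ($\lor_3$) $\beta\Rightarrow_1\alpha\lor\beta$; ($\odot_1$) $(\top\Rightarrow_c\alpha)\land(\top\Rightarrow_d\beta)\to(\top\Rightarrow_{c\odot d}\alpha\odot\beta)$; ($\odot_2$) $(\alpha\Rightarrow_c\bot)\land(\beta\Rightarrow_d\bot)\to(\alpha\odot\beta\Rightarrow_{c\oplus d}\bot)$; ($\odot_3$) $\top\Rightarrow_1\top\odot\top$; ($\sim_1$) $(\alpha\Rightarrow_d\beta)\to(\sim\beta\Rightarrow_d\sim\alpha)$; ($\sim_2$) $\sim\sim\alpha\Rightarrow_1\alpha$; ($\sim_3$) $\alpha\Rightarrow_1\sim\sim\alpha$; ($\top$) $\alpha\Rightarrow_1\top$; ($\bot$) $\bot\Rightarrow_1\alpha$; (0) $\alpha\Rightarrow_0\beta$; ($c$) $\alpha\Rightarrow_c\alpha$; (inkons) $\lnot(\top\Rightarrow_c\bot)$ for $c>0$; (trans$_1$) $(\alpha\Rightarrow_c\beta)\land(\beta\Rightarrow_d\gamma)\to(\alpha\Rightarrow_{c\odot_{\L}d}\gamma)$; (trans$_2$) $(\alpha\Rightarrow_c\bot)\land(\top\Rightarrow_d\beta)\to(\alpha\Rightarrow_{c\oplus_{\L}d}\beta)$;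 (lin$_1$) $(\alpha\Rightarrow_1\beta)\lor(\beta\Rightarrow_1\alpha)$; (lin$_2$) $(\top\Rightarrow_d\alpha)\lor(\alpha\Rightarrow_{1-d}\bot)$. The only rule is modus ponens. $\mathcal T\vdash_{\mathsf{LGI}}\Phi$ means $\Phi$ has a finite derivation from axioms and elements of $\mathcal T$ by modus ponens. *)

theory Defs
  imports "HOL-Analysis.Analysis"
begin

definition tnorm :: "(real \<Rightarrow> real \<Rightarrow> real) \<Rightarrow> bool" where
  "tnorm T \<longleftrightarrow>
     (\<forall>x\<in>{0..1}. \<forall>y\<in>{0..1}. T x y \<in> {0..1}) \<and>
     (\<forall>x\<in>{0..1}. \<forall>y\<in>{0..1}. T x y = T y x) \<and>
     (\<forall>x\<in>{0..1}. \<forall>y\<in>{0..1}. \<forall>z\<in>{0..1}. T (T x y) z = T x (T y z)) \<and>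
     (\<forall>x\<in>{0..1}. \<forall>y\<in>{0..1}. \<forall>z\<in>{0..1}. y \<le> z \<longrightarrow> T x y \<le> T x z) \<and>
     (\<forall>x\<in>{0..1}. T x 1 = x)"

definition continuous_tnorm :: "(real \<Rightarrow> real \<Rightarrow> real) \<Rightarrow> bool" where
  "continuous_tnorm T \<longleftrightarrow> tnorm T \<and>
     continuous_on ({0..1} \<times> {0..1}) (\<lambda>p. T (fst p) (snd p))"

definition tconorm :: "(real \<Rightarrow> real \<Rightarrow> real) \<Rightarrow> real \<Rightarrow> real \<Rightarrow> real" where
  "tconorm T c d = 1 - T (1 - c) (1 - d)"

definition luk_t :: "real \<Rightarrow> real \<Rightarrow> real" where
  "luk_t c d = max (c + d - 1) 0"

definition luk_s :: "real \<Rightarrow> real \<Rightarrow> real" where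
  "luk_s c d = min (c + d) 1"

datatype bexp = Var nat | Bot | Top | BAnd bexp bexp | BOr bexp bexp
  | BTimes bexp bexp | BNeg bexp

text \<open>Formulas: graded implications \<alpha> \<Rightarrow>_c \<beta> combined by classical connectives.
  The grade is a real; well-formedness (grades in [0,1]) is a separate predicate.\<close>
datatype fml = GImp bexp real bexp | FAnd fml fml | FOr fml fml | FNot fml

definition FImp :: "fml \<Rightarrow> fml \<Rightarrow> fml" where
  "FImp \<Phi> \<Psi> = FOr (FNot \<Phi>) \<Psi>"

fun wf_fml :: "fml \<Rightarrow> bool" where
  "wf_fml (GImp a c b) = (0 \<le> c \<and> c \<le> 1)"
| "wf_fml (FAnd p q) = (wf_fml p \<and> wf_fml q)"
| "wf_fml (FOr p q) = (wf_fml p \<and> wf_fml q)"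
| "wf_fml (FNot p) = wf_fml p"

fun feval :: "(bexp \<Rightarrow> real \<Rightarrow> bexp \<Rightarrow> bool) \<Rightarrow> fml \<Rightarrow> bool" where
  "feval v (GImp a c b) = v a c b"
| "feval v (FAnd p q) = (feval v p \<and> feval v q)"
| "feval v (FOr p q) = (feval v p \<or> feval v q)"
| "feval v (FNot p) = (\<not> feval v p)"

text \<open>Substitution instances of classical tautologies are exactly the formulas
  true under every assignment of truth values to the graded-implication atoms.\<close>
definition taut :: "fml \<Rightarrow> bool" where
  "taut \<Phi> \<longleftrightarrow> wf_fml \<Phi> \<and> (\<forall>v. feval v \<Phi>)"

definition unit_iv :: "real \<Rightarrow> bool" where
  "unit_iv c \<longleftrightarrow> 0 \<le> c \<and> c \<le> 1"

inductive lgi_axiom :: "(real \<Rightarrow> real \<Rightarrow> real) \<Rightarrow> fml \<Rightarrow> bool" for T where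
  ax_taut: "taut \<Phi> \<Longrightarrow> lgi_axiom T \<Phi>"
| ax_and1: "unit_iv d \<Longrightarrow> lgi_axiom T (FImp (FAnd (GImp a d b) (GImp a d g)) (GImp a d (BAnd b g)))"
| ax_and2: "lgi_axiom T (GImp (BAnd a b) 1 a)"
| ax_and3: "lgi_axiom T (GImp (BAnd a b) 1 b)"
| ax_or1: "unit_iv d \<Longrightarrow> lgi_axiom T (FImp (FAnd (GImp a d g) (GImp b d g)) (GImp (BOr a b) d g))"
| ax_or2: "lgi_axiom T (GImp a 1 (BOr a b))"
| ax_or3: "lgi_axiom T (GImp b 1 (BOr a b))"
| ax_odot1: "unit_iv c \<Longrightarrow> unit_iv d \<Longrightarrow>
    lgi_axiom T (FImp (FAnd (GImp Top c a) (GImp Top d b)) (GImp Top (T c d) (BTimes a b)))"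
| ax_odot2: "unit_iv c \<Longrightarrow> unit_iv d \<Longrightarrow>
    lgi_axiom T (FImp (FAnd (GImp a c Bot) (GImp b d Bot)) (GImp (BTimes a b) (tconorm T c d) Bot))"
| ax_odot3: "lgi_axiom T (GImp Top 1 (BTimes Top Top))"
| ax_neg1: "unit_iv d \<Longrightarrow> lgi_axiom T (FImp (GImp a d b) (GImp (BNeg b) d (BNeg a)))"
| ax_neg2: "lgi_axiom T (GImp (BNeg (BNeg a)) 1 a)"
| ax_neg3: "lgi_axiom T (GImp a 1 (BNeg (BNeg a)))"
| ax_top: "lgi_axiom T (GImp a 1 Top)"
| ax_bot: "lgi_axiom T (GImp Bot 1 a)"
| ax_zero: "lgi_axiom T (GImp a 0 b)"
| ax_refl: "unit_iv c \<Longrightarrow> lgi_axiom T (GImp a c a)"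
| ax_inkons: "unit_iv c \<Longrightarrow> c > 0 \<Longrightarrow> lgi_axiom T (FNot (GImp Top c Bot))"
| ax_trans1: "unit_iv c \<Longrightarrow> unit_iv d \<Longrightarrow>
    lgi_axiom T (FImp (FAnd (GImp a c b) (GImp b d g)) (GImp a (luk_t c d) g))"
| ax_trans2: "unit_iv c \<Longrightarrow> unit_iv d \<Longrightarrow>
    lgi_axiom T (FImp (FAnd (GImp a c Bot) (GImp Top d b)) (GImp a (luk_s c d) b))"
| ax_lin1: "lgi_axiom T (FOr (GImp a 1 b) (GImp b 1 a))"
| ax_lin2: "unit_iv d \<Longrightarrow> lgi_axiom T (FOr (GImp Top d a) (GImp a (1 - d) Bot))"

inductive lgi_derives :: "(real \<Rightarrow> real \<Rightarrow> real) \<Rightarrow> fml set \<Rightarrow> fml \<Rightarrow> bool" for T \<Gamma> where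
  der_ax: "lgi_axiom T \<Phi> \<Longrightarrow> lgi_derives T \<Gamma> \<Phi>"
| der_hyp: "\<Phi> \<in> \<Gamma> \<Longrightarrow> lgi_derives T \<Gamma> \<Phi>"
| der_mp: "lgi_derives T \<Gamma> (FImp \<Phi> \<Psi>) \<Longrightarrow> lgi_derives T \<Gamma> \<Phi> \<Longrightarrow> lgi_derives T \<Gamma> \<Psi>"

definition tau :: "bexp \<Rightarrow> real \<Rightarrow> fml set" where
  "tau a c = {GImp Top t a | t. 0 \<le> t \<and> t \<le> 1 \<and> t < c}
           \<union> {GImp a (1 - t) Bot | t. 0 \<le> t \<and> t \<le> 1 \<and> t > c}"

end

theory Submission
  imports Defs
begin

(* Provability of tau(alpha,c) says that alpha is graded exactly at c: top =>_t alpha for t < c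
   and alpha =>_(1-t) bot for t > c. For r < 1 - c + d, chaining alpha => bot with top => beta
   by (trans2) yields alpha =>_r beta (degenerate cases go through (top) or (bot) instead).
   For r > 1 - c + d, assuming alpha =>_r beta and chaining top => alpha => beta => bot by
   (trans1) twice gives top =>_e bot with e > 0, contradicting (inkons).
   Neither the t-norm nor well-formedness of the theory plays a role. *)

lemma lgi_derives_propositional_consequence:
  assumes "\<forall>\<Phi>\<in>set \<Phi>s. lgi_derives T \<Gamma> \<Phi> \<and> wf_fml \<Phi>"
    and "wf_fml \<Psi>"
    and "\<forall>v. (\<forall>\<Phi>\<in>set \<Phi>s. feval v \<Phi>) \<longrightarrow> feval v \<Psi>"
  shows "lgi_derives T \<Gamma> \<Psi>"
  using assms
proof (induction \<Phi>s arbitrary: \<Psi>)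
  case Nil
  then show ?case by (intro der_ax ax_taut) (simp add: taut_def)
next
  case (Cons \<Phi> \<Phi>s)
  have "lgi_derives T \<Gamma> (FImp \<Phi> \<Psi>)"
    using Cons.prems by (intro Cons.IH) (auto simp: FImp_def)
  then show ?case
    using Cons.prems by (auto intro: der_mp)
qed

lemma unit_iv_luk_t: "unit_iv c \<Longrightarrow> unit_iv d \<Longrightarrow> unit_iv (luk_t c d)"
  by (simp add: unit_iv_def luk_t_def)

lemma unit_iv_luk_s: "unit_iv c \<Longrightarrow> unit_iv d \<Longrightarrow> unit_iv (luk_s c d)"
  by (simp add: unit_iv_def luk_s_def)

lemma lgi_derives_trans1:
  assumes "lgi_derives T \<Gamma> (GImp x p y)" "lgi_derives T \<Gamma> (GImp y q z)"
    and "unit_iv p" "unit_iv q"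
  shows "lgi_derives T \<Gamma> (GImp x (luk_t p q) z)"
proof -
  have "lgi_derives T \<Gamma> (FImp (FAnd (GImp x p y) (GImp y q z)) (GImp x (luk_t p q) z))"
    using assms by (intro der_ax ax_trans1)
  then show ?thesis
    using assms unit_iv_luk_t[OF assms(3,4)]
    by (intro lgi_derives_propositional_consequence
          [of "[FImp (FAnd (GImp x p y) (GImp y q z)) (GImp x (luk_t p q) z), GImp x p y, GImp y q z]"])
       (auto simp: FImp_def unit_iv_def)
qed

lemma lgi_derives_trans2:
  assumes "lgi_derives T \<Gamma> (GImp x p Bot)" "lgi_derives T \<Gamma> (GImp Top q z)"
    and "unit_iv p" "unit_iv q"
  shows "lgi_derives T \<Gamma> (GImp x (luk_s p q) z)"
proof -
  have "lgi_derives T \<Gamma> (FImp (FAnd (GImp x p Bot) (GImp Top q z)) (GImp x (luk_s p q) z))"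
    using assms by (intro der_ax ax_trans2)
  then show ?thesis
    using assms unit_iv_luk_s[OF assms(3,4)]
    by (intro lgi_derives_propositional_consequence
          [of "[FImp (FAnd (GImp x p Bot) (GImp Top q z)) (GImp x (luk_s p q) z), GImp x p Bot, GImp Top q z]"])
       (auto simp: FImp_def unit_iv_def)
qed

lemma lgi_derives_not_GImp:
  assumes A: "lgi_derives T \<Gamma> (GImp Top p a)" and B: "lgi_derives T \<Gamma> (GImp b q Bot)"
    and "unit_iv p" "unit_iv q" "unit_iv r"
    and pos: "luk_t (luk_t p r) q > 0"
  shows "lgi_derives T \<Gamma> (FNot (GImp a r b))"
proof -
  define u where "u = luk_t p r"
  have u: "unit_iv u" "unit_iv (luk_t u q)"
    using assms by (simp_all add: u_def unit_iv_luk_t)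
  have X1: "lgi_derives T \<Gamma> (FImp (FAnd (GImp Top p a) (GImp a r b)) (GImp Top u b))"
    using assms by (auto intro: der_ax ax_trans1 simp: u_def)
  have X2: "lgi_derives T \<Gamma> (FImp (FAnd (GImp Top u b) (GImp b q Bot)) (GImp Top (luk_t u q) Bot))"
    using assms u by (auto intro: der_ax ax_trans1)
  have N: "lgi_derives T \<Gamma> (FNot (GImp Top (luk_t u q) Bot))"
    using pos u by (auto intro: der_ax ax_inkons simp: u_def)
  show ?thesis
    using A B X1 X2 N assms u
    by (intro lgi_derives_propositional_consequence
          [of "[GImp Top p a, GImp b q Bot, FNot (GImp Top (luk_t u q) Bot),
                FImp (FAnd (GImp Top p a) (GImp a r b)) (GImp Top u b),
                FImp (FAnd (GImp Top u b) (GImp b q Bot)) (GImp Top (luk_t u q) Bot)]"])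
       (auto simp: FImp_def unit_iv_def)
qed

lemma lgi_derives_GImp_below:
  assumes botA: "\<And>t. c < t \<Longrightarrow> t \<le> 1 \<Longrightarrow> lgi_derives T \<Gamma> (GImp a (1 - t) Bot)"
    and topB: "\<And>t. 0 \<le> t \<Longrightarrow> t < d \<Longrightarrow> lgi_derives T \<Gamma> (GImp Top t b)"
    and "unit_iv c" "unit_iv d" "unit_iv r" "r < 1 - c + d"
  shows "lgi_derives T \<Gamma> (GImp a r b)"
proof -
  consider "r < d" | "1 - c > r" | "d \<le> r" "1 - c \<le> r"
    by linarith
  then show ?thesis
  proof cases
    case 1
    have "lgi_derives T \<Gamma> (GImp a (luk_t 1 r) b)"
      using 1 assms by (intro lgi_derives_trans1[OF der_ax[OF ax_top] topB]) (auto simp: unit_iv_def)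
    then show ?thesis
      using assms by (simp add: luk_t_def unit_iv_def)
  next
    case 2
    have "lgi_derives T \<Gamma> (GImp a (luk_t (1 - (1 - r)) 1) b)"
      using 2 assms by (intro lgi_derives_trans1[OF botA der_ax[OF ax_bot]]) (auto simp: unit_iv_def)
    then show ?thesis
      using assms by (simp add: luk_t_def unit_iv_def)
  next
    case 3
    \<comment> \<open>split the slack \<open>e\<close> evenly between the two strict inequalities of \<open>\<tau>\<close>\<close>
    define e where "e = 1 - c + d - r"
    have "lgi_derives T \<Gamma> (GImp a (luk_s (1 - (c + e/2)) (d - e/2)) b)"
      using 3 assms by (intro lgi_derives_trans2 botA topB) (auto simp: unit_iv_def e_def field_simps)
    moreover have "luk_s (1 - (c + e/2)) (d - e/2) = r"
      using assms by (simp add: luk_s_def e_def unit_iv_def)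
    ultimately show ?thesis by simp
  qed
qed

lemma lgi_derives_not_GImp_above:
  assumes topA: "\<And>t. 0 \<le> t \<Longrightarrow> t < c \<Longrightarrow> lgi_derives T \<Gamma> (GImp Top t a)"
    and botB: "\<And>t. d < t \<Longrightarrow> t \<le> 1 \<Longrightarrow> lgi_derives T \<Gamma> (GImp b (1 - t) Bot)"
    and "unit_iv c" "unit_iv d" "unit_iv r" "r > 1 - c + d"
  shows "lgi_derives T \<Gamma> (FNot (GImp a r b))"
proof -
  define e where "e = r - (1 - c + d)"
  \<comment> \<open>each of the two trans1 steps and the final grade absorb a third of \<open>e\<close>\<close>
  have e: "0 < e" "e \<le> c - d"
    using assms by (auto simp: e_def unit_iv_def)
  show ?thesis
  proof (rule lgi_derives_not_GImp)
    show "lgi_derives T \<Gamma> (GImp Top (c - e/3) a)"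
      using e assms by (intro topA) (auto simp: unit_iv_def)
    show "lgi_derives T \<Gamma> (GImp b (1 - (d + e/3)) Bot)"
      using e assms by (intro botB) (auto simp: unit_iv_def)
    show "luk_t (luk_t (c - e/3) r) (1 - (d + e/3)) > 0"
      using assms unfolding luk_t_def e_def unit_iv_def by (auto simp: field_simps split: split_max)
  qed (use e assms in \<open>auto simp: unit_iv_def\<close>)
qed

theorem mainTheorem4:
  fixes T :: "real \<Rightarrow> real \<Rightarrow> real" and \<Gamma> :: "fml set"
    and a b :: bexp and c d r :: real
  assumes "continuous_tnorm T"
    and "\<forall>\<Phi>\<in>\<Gamma>. wf_fml \<Phi>"
    and "0 \<le> c" "c \<le> 1" "0 \<le> d" "d \<le> 1"
    and "\<forall>\<Phi>\<in>tau a c \<union> tau b d. lgi_derives T \<Gamma> \<Phi>"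
    and "0 \<le> r" "r \<le> 1"
  shows "(r < 1 - c + d \<longrightarrow> lgi_derives T \<Gamma> (GImp a r b))
       \<and> (r > 1 - c + d \<longrightarrow> lgi_derives T \<Gamma> (FNot (GImp a r b)))"
proof -
  have units: "unit_iv c" "unit_iv d" "unit_iv r"
    using assms by (simp_all add: unit_iv_def)
  have topA: "lgi_derives T \<Gamma> (GImp Top t a)" if "0 \<le> t" "t < c" for t
    using assms that by (auto simp: tau_def)
  have botA: "lgi_derives T \<Gamma> (GImp a (1 - t) Bot)" if "c < t" "t \<le> 1" for t
    using assms that by (auto simp: tau_def)
  have topB: "lgi_derives T \<Gamma> (GImp Top t b)" if "0 \<le> t" "t < d" for t
    using assms that by (auto simp: tau_def)
  have botB: "lgi_derives T \<Gamma> (GImp b (1 - t) Bot)" if "d < t" "t \<le> 1" for t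
    using assms that by (auto simp: tau_def)
  show ?thesis
    using lgi_derives_GImp_below[OF botA topB units]
      lgi_derives_not_GImp_above[OF topA botB units]
    by blast
qed

end
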